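(* Let $P$ be a convex euclidean $p$-gon and let $f(n)$ be the complexity of the outer billiard about $P$. Then $n\prec f(n)\prec n^{p+1}$.
   Context: Outer billiard: let $X=\mathbb R^2\setminus P$. For each side of $P$ consider the ray extending that side beyond one of its endpoints (the rays $R_a$ extending side $ab$ in the direction of $a$, for consecutive vertices $a,b$ listed counterclockwise); these $p$ rays partition $X$ into regions $X_a,X_b,\dots$ indexed by the vertices, where $X_a$ consists of the points $x$ for which $a$ is the vertex such that the line through $x$ and $a$ supports $P$ with $P$ on a fixed side (the same orientation convention for all points). The outer billiard map $T:X\to X$ is the point reflection $x\mapsto 2a-x$ on $X_a$. A point $x$ is regular if none of $x,Tx,T^2x,\dots$ lies on the rays. The code of length $n$ of a regular point is the word $a_1\cdots a_n$ of vertices with $T^{i-1}x\in X_{a_i}$; $f(n)$ is the number of distinct codes of length $n$. For positive sequences, $g\prec h$ means there is a constant $C$ with $g(n)\le Ch(n)$ for all sufficiently large $n$. *)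

theory Defs
  imports "HOL-Analysis.Analysis"
begin

text \<open>Points of the plane are pairs of reals. A convex p-gon is given by its vertices
  v 0, ..., v (p-1), listed counterclockwise (indices taken mod p).\<close>

definition cross :: "real \<times> real \<Rightarrow> real \<times> real \<Rightarrow> real" where
  "cross u w = fst u * snd w - snd u * fst w"

definition convex_polygon :: "nat \<Rightarrow> (nat \<Rightarrow> real \<times> real) \<Rightarrow> bool" where
  "convex_polygon p v \<longleftrightarrow> p \<ge> 3 \<and>
     (\<forall>i<p. \<forall>j<p. j \<noteq> i \<and> j \<noteq> Suc i mod p \<longrightarrow>
        cross (v (Suc i mod p) - v i) (v j - v i) > 0)"

definition polygon :: "nat \<Rightarrow> (nat \<Rightarrow> real \<times> real) \<Rightarrow> (real \<times> real) set" where
  "polygon p v = convex hull (v ` {..<p})"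

definition ob_ray :: "nat \<Rightarrow> (nat \<Rightarrow> real \<times> real) \<Rightarrow> nat \<Rightarrow> (real \<times> real) set" where
  "ob_ray p v i = {v i + t *\<^sub>R (v i - v (Suc i mod p)) | t. t \<ge> 0}"

definition ob_rays :: "nat \<Rightarrow> (nat \<Rightarrow> real \<times> real) \<Rightarrow> (real \<times> real) set" where
  "ob_rays p v = (\<Union>i<p. ob_ray p v i)"

text \<open>x lies in region X_(v i): the line through x and v i supports P, with P on the left
  of the directed line from x to v i.\<close>
definition ob_region :: "nat \<Rightarrow> (nat \<Rightarrow> real \<times> real) \<Rightarrow> nat \<Rightarrow> (real \<times> real) set" where
  "ob_region p v i = {x. x \<notin> polygon p v \<and> (\<forall>j<p. cross (v i - x) (v j - x) \<ge> 0)}"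

definition ob_index :: "nat \<Rightarrow> (nat \<Rightarrow> real \<times> real) \<Rightarrow> real \<times> real \<Rightarrow> nat" where
  "ob_index p v x = (SOME i. i < p \<and> x \<in> ob_region p v i)"

definition ob_map :: "nat \<Rightarrow> (nat \<Rightarrow> real \<times> real) \<Rightarrow> real \<times> real \<Rightarrow> real \<times> real" where
  "ob_map p v x = 2 *\<^sub>R v (ob_index p v x) - x"

definition ob_regular :: "nat \<Rightarrow> (nat \<Rightarrow> real \<times> real) \<Rightarrow> real \<times> real \<Rightarrow> bool" where
  "ob_regular p v x \<longleftrightarrow> x \<notin> polygon p v \<and> (\<forall>k. (ob_map p v ^^ k) x \<notin> ob_rays p v)"

definition ob_code :: "nat \<Rightarrow> (nat \<Rightarrow> real \<times> real) \<Rightarrow> nat \<Rightarrow> real \<times> real \<Rightarrow> nat list" where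
  "ob_code p v n x = map (\<lambda>k. ob_index p v ((ob_map p v ^^ k) x)) [0..<n]"

definition ob_complexity :: "nat \<Rightarrow> (nat \<Rightarrow> real \<times> real) \<Rightarrow> nat \<Rightarrow> nat" where
  "ob_complexity p v n = card {ob_code p v n x | x. ob_regular p v x}"

end

theory Submission
  imports Defs
begin

(*
  On the interior of the region of a vertex a, the outer billiard map T is the point reflection in
  a, so T^n is a composition of point reflections, i.e. a map x \<mapsto> c + x or x \<mapsto> c - x.

  The complexity f is strictly increasing.  Otherwise the codes of length n would
  determine the next letter, hence every code would be determined by its first n letters.  Far
  away from P in a generic direction an orbit bounces between the two vertices v i, v j extremal
  in that direction, so some regular point has a code starting with n + 2 alternating letters
  i j i j ...; then its whole code alternates.  But two consecutive reflections in v i and v j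
  translate by 2 (v j - v i), so such an orbit eventually leaves the region of v i.

  T^n maps the points with code w of length n onto a convex open "cell image";
  distinct codes give disjoint cell images.  A code has two different continuations only if its
  cell image contains points of two regions, hence meets one of the p rays.  On each ray the cell
  images cut out disjoint open intervals, whose left end points are either the apex of the ray or
  zeros of the affine functions defining the cell images.  The constants in these functions are
  integer combinations of the vertices with coefficients at most 4 n, so there are O(n^p) such
  zeros.  Hence f(n + 1) - f(n) = O(n^p) and f(n) = O(n^(p+1)).
*)

section \<open>Planar geometry and real intervals\<close>

lemma cross_swap: "cross a b = - cross b a"
  by (simp add: cross_def)

lemma cross_self [simp]: "cross a a = 0"
  by (simp add: cross_def)

lemma cross_sub_sub_eq_inner:
  "cross (a - y) (b - y) = cross a b + inner (snd a - snd b, fst b - fst a) y"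
  by (simp add: cross_def inner_prod_def algebra_simps)

lemma convex_cross_nonneg: "convex {z. 0 \<le> cross d (z - a)}"
proof -
  have "{z. 0 \<le> cross d (z - a)} = {z. inner (- snd d, fst d) z \<ge> cross d a}"
    by (auto simp: cross_def inner_prod_def algebra_simps)
  then show ?thesis
    by (simp add: convex_halfspace_ge)
qed

lemma cross_nonneg_trans:
  fixes n a b c :: "real \<times> real"
  assumes "0 < inner n a" "0 < inner n b" "0 < inner n c" "0 \<le> cross a b" "0 \<le> cross b c"
  shows "0 \<le> cross a c"
proof -
  have "inner n b * cross a c = inner n a * cross b c + inner n c * cross a b"
    by (simp add: cross_def inner_prod_def algebra_simps)
  then have "0 \<le> inner n b * cross a c"
    using assms by simp
  then show ?thesis
    using assms(2) by (simp add: zero_le_mult_iff)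
qed

lemma exists_cross_extremal:
  fixes n :: "real \<times> real"
  assumes "finite A" "A \<noteq> {}" "\<forall>a\<in>A. 0 < inner n a"
  shows "\<exists>a\<in>A. \<forall>b\<in>A. 0 \<le> cross a b"
  using assms
proof (induction A rule: finite_ne_induct)
  case (singleton x)
  then show ?case by simp
next
  case (insert x F)
  then obtain a where a: "a \<in> F" "\<forall>b\<in>F. 0 \<le> cross a b"
    by auto
  show ?case
  proof (cases "0 \<le> cross a x")
    case True
    then show ?thesis using a by auto
  next
    case False
    then have "0 \<le> cross x a"
      using cross_swap[of a x] by simp
    then have "\<forall>b\<in>F. 0 \<le> cross x b"
      using insert.prems a by (blast intro: cross_nonneg_trans[of n x a])
    then show ?thesis by auto
  qed
qed

lemma cross_eq_0_imp_parallel: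
  fixes u d :: "real \<times> real"
  assumes "d \<noteq> 0" "cross u d = 0"
  shows "u = (inner u d / inner d d) *\<^sub>R d"
proof -
  obtain u1 u2 d1 d2 where uu: "u = (u1, u2)" and dd: "d = (d1, d2)"
    by (cases u, cases d)
  have D: "d1 * d1 + d2 * d2 \<noteq> 0"
    using assms(1) dd by (auto simp: add_nonneg_eq_0_iff zero_prod_def)
  have c: "u1 * d2 = u2 * d1"
    using assms(2) uu dd by (simp add: cross_def)
  have "u1 * (d1 * d1 + d2 * d2) = (u1 * d1 + u2 * d2) * d1"
    "u2 * (d1 * d1 + d2 * d2) = (u1 * d1 + u2 * d2) * d2"
    using c by (simp_all add: algebra_simps)
  then show ?thesis
    using D uu dd by (simp add: inner_prod_def field_simps)
qed

lemma nonneg_if_pos_along_nat: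
  fixes a c :: real
  assumes "\<forall>k::nat. 0 < a + real k * c"
  shows "0 \<le> c"
proof (rule ccontr)
  assume "\<not> 0 \<le> c"
  then obtain k :: nat where "a < real k * (- c)"
    using ex_less_of_nat_mult[of "- c" a] by auto
  then show False
    using assms[rule_format, of k] by (simp add: algebra_simps)
qed

lemma eventually_pos_affine_at_top:
  fixes a b :: real
  assumes "0 < b"
  shows "\<forall>\<^sub>F s in at_top. 0 < a + s * b"
  unfolding eventually_at_top_linorder
proof (intro exI allI impI)
  fix s assume "(\<bar>a\<bar> + 1) / b \<le> s"
  then have "\<bar>a\<bar> + 1 \<le> s * b"
    using assms by (simp add: pos_divide_le_eq)
  then show "0 < a + s * b" by linarith
qed

lemma Inf_eq_root_if_affine_pos:
  fixes I :: "real set" and \<alpha> \<beta> :: real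
  assumes "I \<noteq> {}" "bdd_below I" "\<forall>t\<in>I. 0 < \<alpha> - t * \<beta>" "\<not> 0 < \<alpha> - Inf I * \<beta>"
  shows "\<beta> \<noteq> 0 \<and> Inf I = \<alpha> / \<beta>"
proof -
  have "I \<subseteq> {t. 0 \<le> \<alpha> - t * \<beta>}"
    using assms(3) by force
  moreover have "closed {t. 0 \<le> \<alpha> - t * \<beta>}"
    by (intro closed_Collect_le continuous_intros)
  ultimately have "closure I \<subseteq> {t. 0 \<le> \<alpha> - t * \<beta>}"
    by (rule closure_minimal)
  then have "\<alpha> - Inf I * \<beta> = 0"
    using closure_contains_Inf[OF assms(1,2)] assms(4) by force
  moreover have "\<beta> \<noteq> 0"
    using assms(1,3,4) by force
  ultimately show ?thesis
    by (simp add: field_simps)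
qed

lemma Inf_eq_imp_intervals_meet:
  fixes A B :: "real set"
  assumes "convex A" "convex B" "bdd_below A" "bdd_below B"
    and "\<forall>t\<in>A. \<exists>t'\<in>A. t < t'" "\<forall>t\<in>B. \<exists>t'\<in>B. t < t'"
    and "A \<noteq> {}" "B \<noteq> {}" "Inf A = Inf B"
  shows "A \<inter> B \<noteq> {}"
proof -
  have above_Inf: "\<exists>t\<in>S. Inf S < t" if "S \<noteq> {}" "bdd_below S" "\<forall>t\<in>S. \<exists>t'\<in>S. t < t'"
    for S :: "real set"
    using that cInf_lower order_le_less_trans by (metis ex_in_conv)
  have below_in: "t \<in> S" if S: "convex S" "bdd_below S" "t1 \<in> S" "Inf S < t" "t \<le> t1"
    for S :: "real set" and t t1
  proof -
    obtain t0 where "t0 \<in> S" "t0 < t"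
      using cInf_lessD[of S t] S(3,4) by auto
    then show ?thesis
      using S is_interval_convex_1 is_interval_1 by (metis less_imp_le)
  qed
  obtain a b where a: "a \<in> A" "Inf A < a" and b: "b \<in> B" "Inf B < b"
    using above_Inf assms by meson
  have "min a b \<in> A" "min a b \<in> B"
    using below_in[OF assms(1,3) a(1)] below_in[OF assms(2,4) b(1)] a b assms(9) by auto
  then show ?thesis by blast
qed

section \<open>Regions of the outer billiard map\<close>

locale convex_billiard =
  fixes p :: nat and v :: "nat \<Rightarrow> real \<times> real"
  assumes convex: "convex_polygon p v"
begin

abbreviation "T \<equiv> ob_map p v"
abbreviation "idx \<equiv> ob_index p v"
abbreviation "code \<equiv> ob_code p v"
abbreviation "regular \<equiv> ob_regular p v"

lemma ob_map_apply: "T y = 2 *\<^sub>R v (idx y) - y"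
  by (simp add: ob_map_def)

lemma funpow_Suc_ob_map: "(T ^^ Suc k) x = 2 *\<^sub>R v (idx ((T ^^ k) x)) - (T ^^ k) x"
  by (simp only: funpow.simps(2) comp_apply ob_map_apply)

lemma funpow_ob_map_add: "(T ^^ l) ((T ^^ q) x) = (T ^^ (l + q)) x"
  by (simp add: funpow_add)

lemma three_le_p: "3 \<le> p"
  using convex by (simp add: convex_polygon_def)

lemma side_left_strict:
  "i < p \<Longrightarrow> j < p \<Longrightarrow> j \<noteq> i \<Longrightarrow> j \<noteq> Suc i mod p \<Longrightarrow>
    0 < cross (v (Suc i mod p) - v i) (v j - v i)"
  using convex by (simp add: convex_polygon_def)

lemma Suc_mod_less [simp]: "Suc i mod p < p"
  using three_le_p by simp

lemma Suc_mod_neq: "i < p \<Longrightarrow> Suc i mod p \<noteq> i"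
  using three_le_p by (cases "Suc i < p") (auto simp: mod_if)

lemma exists_other_vertex:
  assumes "i < p" "j < p"
  shows "\<exists>m<p. m \<noteq> i \<and> m \<noteq> j"
proof (cases "i \<noteq> 0 \<and> j \<noteq> 0")
  case True
  then show ?thesis using three_le_p by (intro exI[of _ 0]) auto
next
  case False
  show ?thesis
  proof (cases "i \<noteq> 1 \<and> j \<noteq> 1")
    case True
    then show ?thesis using three_le_p by (intro exI[of _ 1]) auto
  next
    case False
    with \<open>\<not> (i \<noteq> 0 \<and> j \<noteq> 0)\<close> have "i \<noteq> 2 \<and> j \<noteq> 2"
      by auto
    then show ?thesis using three_le_p by (intro exI[of _ 2]) auto
  qed
qed

lemma exists_pred_vertex:
  assumes "i < p"
  shows "\<exists>m<p. Suc m mod p = i \<and> m \<noteq> i"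
proof (cases i)
  case 0
  then show ?thesis using three_le_p by (intro exI[of _ "p - 1"]) auto
next
  case (Suc m)
  then show ?thesis using assms by (intro exI[of _ m]) auto
qed

lemma vertices_distinct: "i < p \<Longrightarrow> j < p \<Longrightarrow> i \<noteq> j \<Longrightarrow> v i \<noteq> v j"
proof
  assume ij: "i < p" "j < p" "i \<noteq> j" "v i = v j"
  show False
  proof (cases "j = Suc i mod p")
    case False
    then show ?thesis
      using side_left_strict[OF ij(1,2)] ij by (simp add: cross_def)
  next
    case True
    obtain m where "m < p" "m \<noteq> i" "m \<noteq> j"
      using exists_other_vertex[OF ij(1,2)] by blast
    then show ?thesis
      using side_left_strict[OF ij(1), of m] True ij by (simp add: cross_def)
  qed
qed

lemma vertex_in_polygon: "i < p \<Longrightarrow> v i \<in> polygon p v"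
  unfolding polygon_def by (rule hull_inc) auto

lemma polygon_left_of_side:
  assumes i: "i < p" and z: "z \<in> polygon p v"
  shows "0 \<le> cross (v (Suc i mod p) - v i) (z - v i)"
proof -
  let ?H = "{z. 0 \<le> cross (v (Suc i mod p) - v i) (z - v i)}"
  have "convex ?H"
    by (rule convex_cross_nonneg)
  moreover have "v ` {..<p} \<subseteq> ?H"
    using side_left_strict[OF i] by (force simp: cross_def)
  ultimately have "polygon p v \<subseteq> ?H"
    unfolding polygon_def by (rule hull_minimal[rotated])
  then show ?thesis using z by blast
qed

text \<open>The interior of the region \<open>X\<^sub>a\<close> for \<open>a = v i\<close>.\<close>

definition strict_region :: "nat \<Rightarrow> (real \<times> real) set" where
  "strict_region i = {y. \<forall>m<p. m \<noteq> i \<longrightarrow> 0 < cross (v i - y) (v m - y)}"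

lemma strict_region_halfplanes:
  "strict_region i = (\<Inter>m\<in>{..<p} - {i}.
     {y. inner (snd (v i) - snd (v m), fst (v m) - fst (v i)) y > - cross (v i) (v m)})"
  unfolding strict_region_def cross_sub_sub_eq_inner by force

lemma convex_strict_region: "convex (strict_region i)"
  unfolding strict_region_halfplanes by (intro convex_INT convex_halfspace_gt)

lemma open_strict_region: "open (strict_region i)"
  unfolding strict_region_halfplanes by (intro open_INT finite_Diff finite_lessThan ballI open_halfspace_gt)

lemma strict_region_not_polygon:
  assumes i: "i < p" and y: "y \<in> strict_region i"
  shows "y \<notin> polygon p v"
proof
  assume "y \<in> polygon p v"
  moreover obtain m where m: "m < p" "Suc m mod p = i" "m \<noteq> i"
    using exists_pred_vertex[OF i] by blast
  ultimately have "0 \<le> cross (v i - v m) (y - v m)"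
    using polygon_left_of_side[of m y] by simp
  moreover have "0 < cross (v i - y) (v m - y)"
    using y m unfolding strict_region_def by auto
  ultimately show False
    by (simp add: cross_def algebra_simps)
qed

lemma reflect_strict_region_not_polygon:
  assumes i: "i < p" and y: "y \<in> strict_region i"
  shows "2 *\<^sub>R v i - y \<notin> polygon p v"
proof
  assume "2 *\<^sub>R v i - y \<in> polygon p v"
  then have "0 \<le> cross (v (Suc i mod p) - v i) (2 *\<^sub>R v i - y - v i)"
    by (rule polygon_left_of_side[OF i])
  moreover have "0 < cross (v i - y) (v (Suc i mod p) - y)"
    using y Suc_mod_neq[OF i] unfolding strict_region_def by auto
  ultimately show False
    by (simp add: cross_def algebra_simps)
qed

lemma strict_region_subset_region: "i < p \<Longrightarrow> strict_region i \<subseteq> ob_region p v i"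
  unfolding ob_region_def using strict_region_not_polygon
  by (auto simp: strict_region_def less_imp_le)

lemma index_strict_region:
  assumes i: "i < p" and y: "y \<in> strict_region i"
  shows "idx y = i"
  unfolding ob_index_def
proof (rule some_equality)
  show "i < p \<and> y \<in> ob_region p v i"
    using i y strict_region_subset_region by blast
next
  fix i' assume i': "i' < p \<and> y \<in> ob_region p v i'"
  show "i' = i"
  proof (rule ccontr)
    assume "i' \<noteq> i"
    then have "0 < cross (v i - y) (v i' - y)" "0 \<le> cross (v i' - y) (v i - y)"
      using i i' y unfolding strict_region_def ob_region_def by auto
    then show False
      using cross_swap[of "v i - y" "v i' - y"] by linarith
  qed
qed

lemma ob_map_strict_region: "i < p \<Longrightarrow> y \<in> strict_region i \<Longrightarrow> T y = 2 *\<^sub>R v i - y"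
  by (simp add: ob_map_apply index_strict_region)

lemma reflect_strict_region_inj:
  assumes "i < p" "y \<in> strict_region i" "i' < p" "y' \<in> strict_region i'"
    and eq: "2 *\<^sub>R v i - y = 2 *\<^sub>R v i' - y'"
  shows "i = i'" "y = y'"
proof -
  show "i = i'"
  proof (rule ccontr)
    assume "i \<noteq> i'"
    then have "0 < cross (v i - y) (v i' - y)" "0 < cross (v i' - y') (v i - y')"
      using assms unfolding strict_region_def by auto
    moreover have "y' = 2 *\<^sub>R v i' - 2 *\<^sub>R v i + y"
      using eq by (simp add: algebra_simps)
    ultimately show False
      by (simp add: cross_def algebra_simps)
  qed
  then show "y = y'"
    using eq by simp
qed

lemma exists_region:
  assumes y: "y \<notin> polygon p v"
  shows "\<exists>i<p. y \<in> ob_region p v i"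
proof -
  have "compact (polygon p v)" "convex (polygon p v)"
    unfolding polygon_def by (auto intro: finite_imp_compact_convex_hull)
  then obtain a b where ab: "inner a y < b" "\<forall>x\<in>polygon p v. b < inner a x"
    using separating_hyperplane_closed_point[OF _ compact_imp_closed y] by blast
  let ?A = "(\<lambda>m. v m - y) ` {..<p}"
  have "\<forall>u\<in>?A. 0 < inner a u"
    using ab vertex_in_polygon by (force simp: inner_diff_right)
  moreover have "?A \<noteq> {}"
    using three_le_p by (auto simp: lessThan_empty_iff)
  ultimately obtain u where "u \<in> ?A" "\<forall>b\<in>?A. 0 \<le> cross u b"
    using exists_cross_extremal[of ?A a] by blast
  then show ?thesis
    using y unfolding ob_region_def by auto
qed

lemma next_vertex_if_all_left:
  assumes "i < p" "m < p" "m \<noteq> i" "\<forall>k<p. 0 \<le> cross (v m - v i) (v k - v i)"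
  shows "m = Suc i mod p"
proof (rule ccontr)
  assume "m \<noteq> Suc i mod p"
  then have "0 < cross (v (Suc i mod p) - v i) (v m - v i)"
    using side_left_strict assms(1-3) by blast
  moreover have "0 \<le> cross (v m - v i) (v (Suc i mod p) - v i)"
    using assms(4) by simp
  ultimately show False
    using cross_swap[of "v m - v i" "v (Suc i mod p) - v i"] by linarith
qed

definition ray_point :: "nat \<Rightarrow> real \<Rightarrow> real \<times> real" where
  "ray_point j t = v j + t *\<^sub>R (v j - v (Suc j mod p))"

lemma mem_ob_rays_iff: "y \<in> ob_rays p v \<longleftrightarrow> (\<exists>j<p. \<exists>t\<ge>0. y = ray_point j t)"
  unfolding ob_rays_def ob_ray_def ray_point_def by blast

text \<open>Write \<open>y = v i + l (v m - v i)\<close>.  For \<open>l < 0\<close> all vertices lie left of the line from \<open>v i\<close>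
  to \<open>v m\<close>, so \<open>v m\<close> follows \<open>v i\<close>; for \<open>l > 1\<close> symmetrically \<open>v i\<close> follows \<open>v m\<close>; otherwise
  \<open>y\<close> lies in the polygon.\<close>

lemma region_boundary_on_rays:
  assumes i: "i < p" and y: "y \<in> ob_region p v i" and m: "m < p" "m \<noteq> i"
    and collinear: "cross (v i - y) (v m - y) = 0"
  shows "y \<in> ob_rays p v"
proof -
  define d where "d = v m - v i"
  define l where "l = inner (y - v i) d / inner d d"
  have "d \<noteq> 0"
    using vertices_distinct[OF m(1) i m(2)] by (simp add: d_def)
  moreover have "cross (y - v i) d = 0"
    using collinear by (simp add: d_def cross_def algebra_simps)
  ultimately have "y - v i = l *\<^sub>R d"
    unfolding l_def by (rule cross_eq_0_imp_parallel)
  then have yl: "y = v i + l *\<^sub>R d"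
    by (simp add: algebra_simps)
  have side: "0 \<le> - l * cross d (v k - v i)" if "k < p" for k
  proof -
    have "cross (v i - y) (v k - y) = - l * cross d (v k - v i)"
      unfolding yl by (simp add: cross_def algebra_simps)
    then show ?thesis
      using y that unfolding ob_region_def by auto
  qed
  consider "l < 0" | "0 \<le> l" "l \<le> 1" | "1 < l"
    by linarith
  then show ?thesis
  proof cases
    case 1
    have "\<forall>k<p. 0 \<le> cross d (v k - v i)"
      using side 1 by (simp add: mult_le_0_iff)
    then have "m = Suc i mod p"
      using next_vertex_if_all_left[OF i m] by (simp add: d_def)
    then have "y = ray_point i (- l)"
      by (simp add: yl d_def ray_point_def algebra_simps)
    then show ?thesis
      using i 1 unfolding mem_ob_rays_iff by (auto intro!: exI[of _ i] exI[of _ "- l"])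
  next
    case 2
    have "y = (1 - l) *\<^sub>R v i + l *\<^sub>R v m"
      unfolding yl d_def by (simp add: algebra_simps)
    also have "\<dots> \<in> polygon p v"
      using 2 vertex_in_polygon[OF i] vertex_in_polygon[OF m(1)]
        convexD_alt[OF convex_convex_hull, of _ "v ` {..<p}"]
      unfolding polygon_def by blast
    finally show ?thesis
      using y unfolding ob_region_def by auto
  next
    case 3
    have "\<forall>k<p. cross d (v k - v i) \<le> 0"
      using side 3 by (simp add: mult_le_0_iff)
    moreover have "cross (v i - v m) (v k - v m) = - cross d (v k - v i)" for k
      by (simp add: d_def cross_def algebra_simps)
    ultimately have "i = Suc m mod p"
      using next_vertex_if_all_left[OF m(1) i m(2)[symmetric]] by simp
    then have "y = ray_point m (l - 1)"
      by (simp add: yl d_def ray_point_def algebra_simps)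
    then show ?thesis
      using m 3 unfolding mem_ob_rays_iff by (auto intro!: exI[of _ m] exI[of _ "l - 1"])
  qed
qed

lemma mem_strict_region_index:
  assumes "y \<notin> polygon p v" "y \<notin> ob_rays p v"
  shows "idx y < p \<and> y \<in> strict_region (idx y)"
proof -
  obtain i where i: "i < p" "y \<in> ob_region p v i"
    using exists_region[OF assms(1)] by blast
  have "y \<in> strict_region i"
    unfolding strict_region_def
  proof (intro CollectI allI impI)
    fix m assume m: "m < p" "m \<noteq> i"
    have "0 \<le> cross (v i - y) (v m - y)"
      using i m unfolding ob_region_def by auto
    moreover have "cross (v i - y) (v m - y) \<noteq> 0"
      using region_boundary_on_rays[OF i m] assms(2) by blast
    ultimately show "0 < cross (v i - y) (v m - y)"
      by linarith
  qed
  then show ?thesis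
    using i index_strict_region by simp
qed

lemma regular_orbit_not_polygon:
  assumes "regular x"
  shows "(T ^^ k) x \<notin> polygon p v"
proof (induction k)
  case 0
  then show ?case using assms by (simp add: ob_regular_def)
next
  case (Suc k)
  have "(T ^^ k) x \<notin> ob_rays p v"
    using assms unfolding ob_regular_def by blast
  then have "idx ((T ^^ k) x) < p \<and> (T ^^ k) x \<in> strict_region (idx ((T ^^ k) x))"
    using Suc.IH by (rule mem_strict_region_index[rotated])
  then have "2 *\<^sub>R v (idx ((T ^^ k) x)) - (T ^^ k) x \<notin> polygon p v"
    using reflect_strict_region_not_polygon by blast
  then show ?case
    unfolding funpow_Suc_ob_map .
qed

lemma regular_orbit_in_strict_region:
  assumes "regular x"
  shows "idx ((T ^^ k) x) < p \<and> (T ^^ k) x \<in> strict_region (idx ((T ^^ k) x))"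
proof (rule mem_strict_region_index)
  show "(T ^^ k) x \<notin> polygon p v"
    using regular_orbit_not_polygon[OF assms] .
  show "(T ^^ k) x \<notin> ob_rays p v"
    using assms unfolding ob_regular_def by blast
qed

lemma regular_funpow:
  assumes "regular x"
  shows "regular ((T ^^ q) x)"
  using assms regular_orbit_not_polygon[OF assms, of q] unfolding ob_regular_def funpow_ob_map_add
  by simp

section \<open>Codes, reflections and cells\<close>

lemma code_Suc: "code (Suc n) x = code n x @ [idx ((T ^^ n) x)]"
  by (simp add: ob_code_def)

lemma length_code [simp]: "length (code n x) = n"
  by (simp add: ob_code_def)

lemma nth_code: "k < n \<Longrightarrow> code n x ! k = idx ((T ^^ k) x)"
  by (simp add: ob_code_def)

lemma take_code: "k \<le> n \<Longrightarrow> take k (code n x) = code k x"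
  by (simp add: ob_code_def take_map)

lemma set_code_subset:
  assumes "regular x"
  shows "set (code n x) \<subseteq> {..<p}"
  using regular_orbit_in_strict_region[OF assms] by (auto simp: ob_code_def)

definition codes :: "nat \<Rightarrow> nat list set" where
  "codes n = code n ` Collect regular"

lemma ob_complexity_eq_card_codes: "ob_complexity p v n = card (codes n)"
  unfolding ob_complexity_def codes_def by (rule arg_cong[where f = card]) blast

lemma codes_subset: "codes n \<subseteq> {w. set w \<subseteq> {..<p} \<and> length w = n}"
  using set_code_subset by (auto simp: codes_def)

lemma finite_codes: "finite (codes n)"
  by (rule finite_subset[OF codes_subset finite_lists_length_eq]) simp

lemma take_codes_Suc: "take n ` codes (Suc n) = codes n"
  by (simp add: codes_def image_image take_code)

lemma code_next_determined:
  assumes "card (codes (Suc n)) \<le> card (codes n)"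
    and "regular x" "regular y" "code n x = code n y"
  shows "idx ((T ^^ n) x) = idx ((T ^^ n) y)"
proof -
  have "inj_on (take n) (codes (Suc n))"
    using assms(1) take_codes_Suc card_image_le[OF finite_codes, of "take n" "Suc n"]
    by (intro eq_card_imp_inj_on finite_codes) simp
  moreover have "code (Suc n) x \<in> codes (Suc n)" "code (Suc n) y \<in> codes (Suc n)"
    using assms(2,3) by (simp_all add: codes_def)
  moreover have "take n (code (Suc n) x) = take n (code (Suc n) y)"
    using assms(4) by (simp add: take_code)
  ultimately have "code (Suc n) x = code (Suc n) y"
    by (simp add: inj_on_def)
  then show ?thesis
    by (simp add: code_Suc)
qed

definition reflections :: "nat list \<Rightarrow> real \<times> real \<Rightarrow> real \<times> real" where
  "reflections w y = foldl (\<lambda>z a. 2 *\<^sub>R v a - z) y w"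

lemma reflections_Nil [simp]: "reflections [] y = y"
  by (simp add: reflections_def)

lemma reflections_snoc [simp]: "reflections (w @ [a]) y = 2 *\<^sub>R v a - reflections w y"
  by (simp add: reflections_def)

lemma reflections_Cons: "reflections (a # w) y = reflections w (2 *\<^sub>R v a - y)"
  by (simp add: reflections_def)

lemma reflections_affine: "reflections w y = reflections w 0 + (-1) ^ length w *\<^sub>R y"
  by (induction w rule: rev_induct) (simp_all add: algebra_simps)

lemma reflections_eq_affine: "reflections w = (\<lambda>y. reflections w 0 + (-1) ^ length w *\<^sub>R y)"
  by (rule ext) (rule reflections_affine)

lemma reflections_rev_cancel [simp]: "reflections (rev w) (reflections w y) = y"
  by (induction w arbitrary: y rule: rev_induct) (simp_all add: reflections_Cons)

lemma reflections_convex_comb: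
  "reflections w ((1 - t) *\<^sub>R y1 + t *\<^sub>R y2) = (1 - t) *\<^sub>R reflections w y1 + t *\<^sub>R reflections w y2"
  by (induction w rule: rev_induct) (simp_all add: algebra_simps)

lemma continuous_reflections: "continuous (at y) (reflections w)"
  by (subst reflections_eq_affine) (intro continuous_intros)

lemma orbit_eq_reflections: "(T ^^ k) x = reflections (code k x) x"
proof (induction k)
  case 0
  then show ?case by (simp add: ob_code_def)
next
  case (Suc k)
  then show ?case by (simp only: funpow_Suc_ob_map code_Suc reflections_snoc)
qed

lemma not_regular_on_ray_line:
  assumes "x \<notin> polygon p v" "\<not> regular x"
  shows "\<exists>\<sigma>\<in>{1, -1}. \<exists>w. \<exists>j<p.
           cross (v j - v (Suc j mod p)) (\<sigma> *\<^sub>R x + reflections w 0 - v j) = 0"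
proof -
  obtain k where "(T ^^ k) x \<in> ob_rays p v"
    using assms unfolding ob_regular_def by blast
  then obtain j t where j: "j < p" and jt: "(T ^^ k) x = v j + t *\<^sub>R (v j - v (Suc j mod p))"
    unfolding ob_rays_def ob_ray_def by blast
  have "(T ^^ k) x = reflections (code k x) 0 + (-1) ^ length (code k x) *\<^sub>R x"
    unfolding orbit_eq_reflections by (rule reflections_affine)
  with jt have "(-1) ^ k *\<^sub>R x + reflections (code k x) 0 - v j = t *\<^sub>R (v j - v (Suc j mod p))"
    by (simp add: algebra_simps)
  then have "cross (v j - v (Suc j mod p)) ((-1) ^ k *\<^sub>R x + reflections (code k x) 0 - v j) = 0"
    by (simp add: cross_def)
  moreover have "(-1::real) ^ k \<in> {1, -1}"
    by (cases "even k") auto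
  ultimately show ?thesis
    using j by blast
qed

lemma negligible_ray_line_vimage:
  assumes j: "j < p" and \<sigma>: "\<sigma> \<noteq> 0"
  shows "negligible {x. cross (v j - v (Suc j mod p)) (\<sigma> *\<^sub>R x + c - v j) = 0}"
proof -
  let ?u = "v j - v (Suc j mod p)"
  let ?n = "\<sigma> *\<^sub>R (- snd ?u, fst ?u)"
  have "?u \<noteq> 0"
    using vertices_distinct[OF j Suc_mod_less] Suc_mod_neq[OF j] by auto
  then have "?n \<noteq> 0"
    using \<sigma> by (auto simp: prod_eq_iff)
  moreover have "cross ?u (\<sigma> *\<^sub>R x + c - v j) = inner ?n x + cross ?u (c - v j)" for x
    by (simp add: cross_def inner_prod_def algebra_simps)
  then have "{x. cross ?u (\<sigma> *\<^sub>R x + c - v j) = 0} = {x. inner ?n x = - cross ?u (c - v j)}"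
    by (auto simp: eq_neg_iff_add_eq_0)
  ultimately show ?thesis
    by (simp add: negligible_hyperplane)
qed

text \<open>Irregular points lie on countably many lines, so regular points are dense.\<close>

lemma dense_regular:
  assumes "open U" "U \<noteq> {}" "U \<inter> polygon p v = {}"
  shows "\<exists>x\<in>U. regular x"
proof -
  define L where "L \<sigma> w j = {x. cross (v j - v (Suc j mod p)) (\<sigma> *\<^sub>R x + reflections w 0 - v j) = 0}"
    for \<sigma> w j
  let ?I = "{1::real, -1} \<times> (UNIV :: nat list set) \<times> {..<p}"
  have "countable ?I"
    by (intro countable_SIGMA) auto
  moreover have "negligible (L \<sigma> w j)" if "(\<sigma>, w, j) \<in> ?I" for \<sigma> w j
    unfolding L_def by (rule negligible_ray_line_vimage) (use that in auto)
  ultimately have "negligible (\<Union>(\<sigma>, w, j)\<in>?I. L \<sigma> w j)"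
    by (intro negligible_countable_Union) auto
  then have "\<not> U \<subseteq> (\<Union>(\<sigma>, w, j)\<in>?I. L \<sigma> w j)"
    using open_not_negligible[OF assms(1,2)] negligible_subset by blast
  then obtain x where x: "x \<in> U" "x \<notin> (\<Union>(\<sigma>, w, j)\<in>?I. L \<sigma> w j)"
    by blast
  have "regular x"
  proof (rule ccontr)
    assume "\<not> regular x"
    moreover have "x \<notin> polygon p v"
      using x(1) assms(3) by blast
    ultimately obtain \<sigma> w j where "\<sigma> \<in> {1, -1}" "j < p" "x \<in> L \<sigma> w j"
      using not_regular_on_ray_line unfolding L_def by blast
    then show False
      using x(2) by blast
  qed
  then show ?thesis
    using x(1) by blast
qed

definition cell :: "nat list \<Rightarrow> (real \<times> real) set" where
  "cell w = {y. \<forall>k<length w. reflections (take k w) y \<in> strict_region (w ! k)}"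

lemma cell_snoc: "cell (w @ [a]) = {y \<in> cell w. reflections w y \<in> strict_region a}"
  by (auto simp: cell_def nth_append less_Suc_eq)

lemma regular_in_cell: "regular x \<Longrightarrow> x \<in> cell (code n x)"
  using regular_orbit_in_strict_region
  by (simp add: cell_def take_code nth_code orbit_eq_reflections[symmetric])

definition cell_image :: "nat list \<Rightarrow> (real \<times> real) set" where
  "cell_image w = reflections w ` cell w"

lemma mem_cell_image_iff: "z \<in> cell_image w \<longleftrightarrow> reflections (rev w) z \<in> cell w"
  unfolding cell_image_def using reflections_rev_cancel[of "rev w" z] by force

lemma orbit_in_cell_image: "regular x \<Longrightarrow> (T ^^ n) x \<in> cell_image (code n x)"
  unfolding cell_image_def orbit_eq_reflections by (intro imageI regular_in_cell)

lemma cell_image_snoc: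
  "z \<in> cell_image (w @ [a]) \<longleftrightarrow> (\<exists>u\<in>cell_image w. u \<in> strict_region a \<and> z = 2 *\<^sub>R v a - u)"
  unfolding cell_image_def cell_snoc by auto

lemma cell_image_disjoint:
  assumes "length w = length w'" "set w \<subseteq> {..<p}" "set w' \<subseteq> {..<p}"
    and "z \<in> cell_image w" "z \<in> cell_image w'"
  shows "w = w'"
  using assms
proof (induction w arbitrary: w' z rule: rev_induct)
  case Nil
  then show ?case by simp
next
  case (snoc a w)
  then obtain w'' a' where w': "w' = w'' @ [a']"
    by (cases w' rule: rev_cases) auto
  obtain u where u: "u \<in> cell_image w" "u \<in> strict_region a" "z = 2 *\<^sub>R v a - u"
    using snoc.prems(4) cell_image_snoc by blast
  obtain u' where u': "u' \<in> cell_image w''" "u' \<in> strict_region a'" "z = 2 *\<^sub>R v a' - u'"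
    using snoc.prems(5) cell_image_snoc unfolding w' by blast
  have "a < p" "a' < p"
    using snoc.prems(2,3) w' by auto
  then have "a = a'" "u = u'"
    using reflect_strict_region_inj[of a u a' u'] u u' by auto
  moreover have "w = w''"
    using snoc.IH[of w'' u] snoc.prems w' u u' \<open>u = u'\<close> by auto
  ultimately show ?case
    using w' by simp
qed

lemma cell_image_not_polygon:
  assumes "set w \<subseteq> {..<p}" "w \<noteq> []" "z \<in> cell_image w"
  shows "z \<notin> polygon p v"
proof -
  obtain w' a where w: "w = w' @ [a]"
    using assms(2) rev_exhaust by blast
  then obtain u where "u \<in> strict_region a" "z = 2 *\<^sub>R v a - u"
    using assms(3) cell_image_snoc by blast
  moreover have "a < p"
    using assms(1) w by auto
  ultimately show ?thesis
    using reflect_strict_region_not_polygon by blast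
qed

lemma convex_cell: "convex (cell w)"
  unfolding convex_alt
proof (intro ballI allI impI)
  fix y1 y2 and t :: real
  assume "y1 \<in> cell w" "y2 \<in> cell w" "0 \<le> t \<and> t \<le> 1"
  then show "(1 - t) *\<^sub>R y1 + t *\<^sub>R y2 \<in> cell w"
    using convexD_alt[OF convex_strict_region] by (simp add: cell_def reflections_convex_comb)
qed

lemma convex_cell_image: "convex (cell_image w)"
proof -
  have "cell_image w = (\<lambda>y. reflections w 0 + (-1) ^ length w *\<^sub>R y) ` cell w"
    unfolding cell_image_def by (subst reflections_eq_affine) (rule refl)
  then show ?thesis
    using convex_affinity[OF convex_cell] by simp
qed

lemma open_cell: "open (cell w)"
proof -
  have "cell w = (\<Inter>k\<in>{..<length w}. reflections (take k w) -` strict_region (w ! k))"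
    by (auto simp: cell_def)
  also have "open \<dots>"
    by (intro open_INT finite_lessThan ballI continuous_open_vimage open_strict_region
        continuous_reflections)
  finally show ?thesis .
qed

lemma open_cell_image: "open (cell_image w)"
proof -
  have "cell_image w = reflections (rev w) -` cell w"
    using mem_cell_image_iff by blast
  also have "open \<dots>"
    by (intro continuous_open_vimage open_cell continuous_reflections)
  finally show ?thesis .
qed

section \<open>Linear lower bound\<close>

definition alternating :: "nat \<Rightarrow> nat \<Rightarrow> nat \<Rightarrow> nat" where
  "alternating i j k = (if even k then i else j)"

lemma alternating_Suc_Suc [simp]: "alternating i j (Suc (Suc k)) = alternating i j k"
  by (simp add: alternating_def)

lemma exists_generic_direction: "\<exists>e. \<forall>m<p. \<forall>m'<p. m \<noteq> m' \<longrightarrow> cross e (v m - v m') \<noteq> 0"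
proof -
  let ?slopes = "(\<lambda>(m, m'). snd (v m - v m') / fst (v m - v m')) ` ({..<p} \<times> {..<p})"
  have "finite (real -` ?slopes)"
    by (intro finite_vimageI) (auto simp: inj_def)
  then obtain t :: nat where "t \<notin> real -` ?slopes"
    using ex_new_if_finite[OF infinite_UNIV_nat] by blast
  then have t: "real t \<notin> ?slopes"
    by simp
  have "cross (1, real t) (v m - v m') \<noteq> 0" if "m < p" "m' < p" "m \<noteq> m'" for m m'
  proof
    assume c: "cross (1, real t) (v m - v m') = 0"
    have "v m - v m' \<noteq> 0"
      using vertices_distinct[OF that] by simp
    then have "fst (v m - v m') \<noteq> 0"
      using c by (auto simp: cross_def prod_eq_iff)
    then have "real t = snd (v m - v m') / fst (v m - v m')"
      using c by (simp add: cross_def field_simps)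
    then show False
      using t that by force
  qed
  then show ?thesis by blast
qed

lemma exists_extremal_vertex:
  assumes e: "\<forall>m<p. \<forall>m'<p. m \<noteq> m' \<longrightarrow> cross e (v m - v m') \<noteq> 0"
  shows "\<exists>i<p. \<forall>m<p. m \<noteq> i \<longrightarrow> cross e (v m - v i) < 0"
proof -
  define \<phi> where "\<phi> m = cross e (v m)" for m
  have diff: "cross e (v m - v m') = \<phi> m - \<phi> m'" for m m'
    by (simp add: \<phi>_def cross_def algebra_simps)
  have fin: "finite (\<phi> ` {..<p})" and ne: "\<phi> ` {..<p} \<noteq> {}"
    using three_le_p by (auto simp: lessThan_empty_iff)
  obtain i where i: "i < p" "\<phi> i = Max (\<phi> ` {..<p})"
    using Max_in[OF fin ne] by auto
  have "cross e (v m - v i) < 0" if m: "m < p" "m \<noteq> i" for m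
  proof -
    have "\<phi> m \<le> \<phi> i" "\<phi> m \<noteq> \<phi> i"
      using i m Max_ge[OF fin] e[rule_format, OF m(1) i(1) m(2)] diff by auto
    then show ?thesis
      using diff by simp
  qed
  then show ?thesis
    using i(1) by blast
qed

lemma exists_extremal_vertices:
  obtains i j e where "i < p" "j < p" "i \<noteq> j"
    "\<forall>m<p. m \<noteq> i \<longrightarrow> cross e (v m - v i) < 0"
    "\<forall>m<p. m \<noteq> j \<longrightarrow> 0 < cross e (v m - v j)"
proof -
  obtain e where e: "\<forall>m<p. \<forall>m'<p. m \<noteq> m' \<longrightarrow> cross e (v m - v m') \<noteq> 0"
    using exists_generic_direction by blast
  have cross_uminus: "cross (- e) u = - cross e u" for u
    by (simp add: cross_def)
  obtain i where i: "i < p" "\<forall>m<p. m \<noteq> i \<longrightarrow> cross e (v m - v i) < 0"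
    using exists_extremal_vertex[OF e] by blast
  obtain j where j: "j < p" "\<forall>m<p. m \<noteq> j \<longrightarrow> 0 < cross e (v m - v j)"
    using exists_extremal_vertex[of "- e"] e by (auto simp: cross_uminus)
  moreover have "i \<noteq> j"
  proof
    assume "i = j"
    moreover obtain m where "m < p" "m \<noteq> i"
      using exists_other_vertex[OF i(1) i(1)] by blast
    ultimately show False
      using i j by force
  qed
  ultimately show thesis
    using that i by blast
qed

lemma exists_noncollinear_vertex:
  assumes "i < p" "j < p" "i \<noteq> j"
  shows "\<exists>m<p. m \<noteq> i \<and> m \<noteq> j \<and> cross (v j - v i) (v m - v i) \<noteq> 0"
proof (cases "j = Suc i mod p")
  case True
  obtain m where "m < p" "m \<noteq> i" "m \<noteq> j"
    using exists_other_vertex[OF assms(1,2)] by blast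
  then show ?thesis
    using side_left_strict[OF assms(1), of m] True by force
next
  case False
  then have "0 < cross (v (Suc i mod p) - v i) (v j - v i)"
    using side_left_strict[OF assms(1,2)] assms(3) by simp
  then have "cross (v j - v i) (v (Suc i mod p) - v i) \<noteq> 0"
    using cross_swap[of "v j - v i" "v (Suc i mod p) - v i"] by linarith
  then show ?thesis
    using False Suc_mod_neq[OF assms(1)] by (intro exI[of _ "Suc i mod p"]) auto
qed

lemma eventually_in_strict_region:
  assumes "\<forall>m<p. m \<noteq> i \<longrightarrow> cross e (v m - v i) < 0"
  shows "\<forall>\<^sub>F s in at_top. c + s *\<^sub>R e \<in> strict_region i"
proof -
  have "\<forall>\<^sub>F s in at_top. 0 < cross (v i - (c + s *\<^sub>R e)) (v m - (c + s *\<^sub>R e))"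
    if "m \<in> {..<p} - {i}" for m
  proof -
    have "cross (v i - (c + s *\<^sub>R e)) (v m - (c + s *\<^sub>R e))
        = cross (v i - c) (v m - c) + s * (- cross e (v m - v i))" for s
      by (simp add: cross_def algebra_simps)
    then show ?thesis
      using eventually_pos_affine_at_top[of "- cross e (v m - v i)"] assms that by simp
  qed
  then have "\<forall>\<^sub>F s in at_top. \<forall>m\<in>{..<p} - {i}.
      0 < cross (v i - (c + s *\<^sub>R e)) (v m - (c + s *\<^sub>R e))"
    by (intro eventually_ball_finite) auto
  then show ?thesis
    by (rule eventually_mono) (auto simp: strict_region_def)
qed

text \<open>Reflecting alternately in \<open>v i\<close> and \<open>v j\<close> translates a point by \<open>2 (v j - v i)\<close>
  every two steps.\<close>

definition zigzag :: "nat \<Rightarrow> nat \<Rightarrow> real \<times> real \<Rightarrow> nat \<Rightarrow> real \<times> real" where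
  "zigzag i j x k = x + (2 * real k) *\<^sub>R (v j - v i)"

definition bounces :: "nat \<Rightarrow> nat \<Rightarrow> real \<times> real \<Rightarrow> nat \<Rightarrow> bool" where
  "bounces i j x k \<longleftrightarrow>
     zigzag i j x k \<in> strict_region i \<and> 2 *\<^sub>R v i - zigzag i j x k \<in> strict_region j"

lemma orbit_alternates_if_bounces:
  assumes ij: "i < p" "j < p"
    and zz: "\<forall>k\<le>L. bounces i j x k"
  shows "\<forall>k\<le>2 * L + 1. idx ((T ^^ k) x) = alternating i j k"
proof -
  have even: "(T ^^ (2 * k)) x = zigzag i j x k" if "k \<le> L" for k
    using that
  proof (induction k)
    case 0
    then show ?case by (simp add: zigzag_def)
  next
    case (Suc k)
    then have "(T ^^ (2 * Suc k)) x = T (T (zigzag i j x k))"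
      by simp
    also have "\<dots> = 2 *\<^sub>R v j - (2 *\<^sub>R v i - zigzag i j x k)"
      using zz Suc.prems ij by (simp add: bounces_def ob_map_strict_region)
    also have "\<dots> = zigzag i j x (Suc k)"
      by (simp add: zigzag_def algebra_simps)
    finally show ?case .
  qed
  show ?thesis
  proof (intro allI impI)
    fix k assume k: "k \<le> 2 * L + 1"
    define h where "h = k div 2"
    have h: "h \<le> L"
      using div_le_mono[OF k, of 2] by (simp add: h_def)
    show "idx ((T ^^ k) x) = alternating i j k"
    proof (cases "even k")
      case True
      then have "k = 2 * h"
        by (simp add: h_def)
      then show ?thesis
        using even[OF h] zz h ij True by (simp add: bounces_def index_strict_region alternating_def)
    next
      case False
      then have "k = Suc (2 * h)"
        unfolding h_def by presburger
      then have "(T ^^ k) x = 2 *\<^sub>R v i - zigzag i j x h"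
        using even[OF h] zz h ij by (simp add: bounces_def ob_map_strict_region)
      then show ?thesis
        using zz h ij False by (simp add: bounces_def index_strict_region alternating_def)
    qed
  qed
qed

lemma bounces_if_orbit_alternates:
  assumes "regular x" "\<forall>k. idx ((T ^^ k) x) = alternating i j k"
  shows "bounces i j x k"
proof -
  have idx_even: "idx ((T ^^ (2 * k)) x) = i" for k
    using assms(2)[rule_format, of "2 * k"] by (simp add: alternating_def)
  have idx_odd: "idx ((T ^^ Suc (2 * k)) x) = j" for k
    using assms(2)[rule_format, of "Suc (2 * k)"] by (simp add: alternating_def)
  have even: "(T ^^ (2 * k)) x = zigzag i j x k" for k
  proof (induction k)
    case 0
    then show ?case by (simp add: zigzag_def)
  next
    case (Suc k)
    have "(T ^^ (2 * Suc k)) x = 2 *\<^sub>R v j - (2 *\<^sub>R v i - (T ^^ (2 * k)) x)"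
      using idx_even[of k] idx_odd[of k] by (simp add: ob_map_apply)
    also have "\<dots> = zigzag i j x (Suc k)"
      unfolding Suc.IH by (simp add: zigzag_def algebra_simps)
    finally show ?case .
  qed
  have "(T ^^ (2 * k)) x \<in> strict_region i" "(T ^^ Suc (2 * k)) x \<in> strict_region j"
    using regular_orbit_in_strict_region[OF assms(1), of "2 * k"]
      regular_orbit_in_strict_region[OF assms(1), of "Suc (2 * k)"]
    unfolding idx_even idx_odd by blast+
  moreover have "(T ^^ Suc (2 * k)) x = 2 *\<^sub>R v i - (T ^^ (2 * k)) x"
    using idx_even[of k] by (simp add: ob_map_apply)
  ultimately show ?thesis
    by (simp add: bounces_def even)
qed

lemma not_bounces_forever:
  assumes "i < p" "j < p" "i \<noteq> j"
  shows "\<not> (\<forall>k. bounces i j x k)"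
proof
  assume zz: "\<forall>k. bounces i j x k"
  obtain m where m: "m < p" "m \<noteq> i" "m \<noteq> j" "cross (v j - v i) (v m - v i) \<noteq> 0"
    using exists_noncollinear_vertex[OF assms] by blast
  let ?c = "cross (v j - v i) (v m - v i)"
  have "0 \<le> - (2 * ?c)"
  proof (rule nonneg_if_pos_along_nat[of "cross (v i - x) (v m - v i)"], intro allI)
    fix k :: nat
    have "0 < cross (v i - zigzag i j x k) (v m - zigzag i j x k)"
      using zz m unfolding bounces_def strict_region_def by blast
    also have "\<dots> = cross (v i - x) (v m - v i) + real k * - (2 * ?c)"
      by (simp add: zigzag_def cross_def algebra_simps)
    finally show "0 < cross (v i - x) (v m - v i) + real k * - (2 * ?c)" .
  qed
  moreover have "0 \<le> 2 * ?c"
  proof (rule nonneg_if_pos_along_nat[of "cross (v j - 2 *\<^sub>R v i + x) (v m - v j)"], intro allI)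
    fix k :: nat
    have "0 < cross (v j - (2 *\<^sub>R v i - zigzag i j x k)) (v m - (2 *\<^sub>R v i - zigzag i j x k))"
      using zz m unfolding bounces_def strict_region_def by blast
    also have "\<dots> = cross (v j - 2 *\<^sub>R v i + x) (v m - v j) + real k * (2 * ?c)"
      by (simp add: zigzag_def cross_def algebra_simps)
    finally show "0 < cross (v j - 2 *\<^sub>R v i + x) (v m - v j) + real k * (2 * ?c)" .
  qed
  ultimately show False
    using m(4) by linarith
qed

text \<open>Far out in a generic direction, a point bounces between the two vertices extremal in that
  direction for as long as we like.\<close>

lemma exists_regular_bouncing:
  assumes ij: "i < p" "j < p"
    and ei: "\<forall>m<p. m \<noteq> i \<longrightarrow> cross e (v m - v i) < 0"
    and ej: "\<forall>m<p. m \<noteq> j \<longrightarrow> 0 < cross e (v m - v j)"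
  shows "\<exists>x. regular x \<and> (\<forall>k\<le>L. bounces i j x k)"
proof -
  define U where "U = (\<Inter>k\<in>{..L}. (\<lambda>x. zigzag i j x k) -` strict_region i
                                    \<inter> (\<lambda>x. 2 *\<^sub>R v i - zigzag i j x k) -` strict_region j)"
  have "open U"
    unfolding U_def zigzag_def
    by (intro open_INT finite_atMost ballI open_Int continuous_open_vimage open_strict_region
        continuous_intros)
  have ej': "\<forall>m<p. m \<noteq> j \<longrightarrow> cross (- e) (v m - v j) < 0"
    using ej by (simp add: cross_def)
  have "\<forall>\<^sub>F s in at_top. \<forall>k\<in>{..L}. bounces i j (s *\<^sub>R e) k"
    unfolding bounces_def
  proof (intro eventually_ball_finite finite_atMost ballI eventually_conj)
    fix k
    show "\<forall>\<^sub>F s in at_top. zigzag i j (s *\<^sub>R e) k \<in> strict_region i"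
      using eventually_in_strict_region[OF ei, of "(2 * real k) *\<^sub>R (v j - v i)"]
      by (simp add: zigzag_def add.commute)
    show "\<forall>\<^sub>F s in at_top. 2 *\<^sub>R v i - zigzag i j (s *\<^sub>R e) k \<in> strict_region j"
      using eventually_in_strict_region[OF ej', of "2 *\<^sub>R v i - (2 * real k) *\<^sub>R (v j - v i)"]
      by (simp add: zigzag_def algebra_simps)
  qed
  then obtain N where "\<And>s. N \<le> s \<Longrightarrow> \<forall>k\<in>{..L}. bounces i j (s *\<^sub>R e) k"
    unfolding eventually_at_top_linorder by blast
  then have "N *\<^sub>R e \<in> U"
    unfolding U_def bounces_def by blast
  moreover have "x \<notin> polygon p v" if "x \<in> U" for x
  proof -
    have "zigzag i j x 0 \<in> strict_region i"
      using that unfolding U_def by blast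
    then show ?thesis
      using strict_region_not_polygon[OF ij(1)] by (simp add: zigzag_def)
  qed
  ultimately obtain x where "x \<in> U" "regular x"
    using dense_regular[OF \<open>open U\<close>] by blast
  then show ?thesis
    unfolding U_def bounces_def by blast
qed

text \<open>Sliding-window argument: if words of length \<open>n\<close> determine the next letter, then the
  first \<open>n\<close> letters determine the whole code.\<close>

lemma index_agree_if_next_determined:
  assumes det: "\<And>x y. regular x \<Longrightarrow> regular y \<Longrightarrow> code n x = code n y \<Longrightarrow>
      idx ((T ^^ n) x) = idx ((T ^^ n) y)"
    and xy: "regular x" "regular y" "code n x = code n y"
  shows "idx ((T ^^ k) x) = idx ((T ^^ k) y)"
proof (induction k rule: less_induct)
  case (less k)
  show ?case
  proof (cases "k < n")
    case True
    then show ?thesis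
      using nth_code[OF True, of x] nth_code[OF True, of y] xy(3) by simp
  next
    case False
    define q where "q = k - n"
    have k: "k = n + q"
      using False by (simp add: q_def)
    have "code n ((T ^^ q) x) = code n ((T ^^ q) y)"
    proof (rule nth_equalityI)
      fix l assume "l < length (code n ((T ^^ q) x))"
      then show "code n ((T ^^ q) x) ! l = code n ((T ^^ q) y) ! l"
        using less.IH[of "l + q"] k by (simp add: nth_code funpow_ob_map_add)
    qed simp
    then have "idx ((T ^^ n) ((T ^^ q) x)) = idx ((T ^^ n) ((T ^^ q) y))"
      using det regular_funpow xy by blast
    then show ?thesis
      by (simp add: k funpow_ob_map_add add.commute)
  qed
qed

lemma alternating_forever_if_next_determined:
  assumes det: "\<And>x y. regular x \<Longrightarrow> regular y \<Longrightarrow> code n x = code n y \<Longrightarrow>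
      idx ((T ^^ n) x) = idx ((T ^^ n) y)"
    and x: "regular x" and prefix: "\<forall>k\<le>n + 1. idx ((T ^^ k) x) = alternating i j k"
  shows "idx ((T ^^ k) x) = alternating i j k"
proof -
  have "code n x = code n ((T ^^ 2) x)"
  proof (rule nth_equalityI)
    fix l assume "l < length (code n x)"
    then have l: "l < n"
      by simp
    then have "l \<le> n + 1" "l + 2 \<le> n + 1"
      by linarith+
    then have "idx ((T ^^ l) x) = alternating i j l"
      "idx ((T ^^ (l + 2)) x) = alternating i j (l + 2)"
      using prefix by blast+
    then show "code n x ! l = code n ((T ^^ 2) x) ! l"
      by (simp only: nth_code[OF l] funpow_ob_map_add add_2_eq_Suc' alternating_Suc_Suc)
  qed simp
  then have period: "idx ((T ^^ k) x) = idx ((T ^^ (k + 2)) x)" for k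
    using index_agree_if_next_determined[OF det x regular_funpow[OF x]]
    unfolding funpow_ob_map_add by blast
  show ?thesis
  proof (induction k rule: less_induct)
    case (less k)
    show ?case
    proof (cases "k < 2")
      case True
      then show ?thesis
        using prefix[rule_format, of k] by simp
    next
      case False
      define k' where "k' = k - 2"
      have k: "k = k' + 2"
        using False by (simp add: k'_def)
      then show ?thesis
        using less.IH[of k'] period[of k'] by simp
    qed
  qed
qed

lemma card_codes_less_Suc: "card (codes n) < card (codes (Suc n))"
proof (rule ccontr)
  assume "\<not> card (codes n) < card (codes (Suc n))"
  then have le: "card (codes (Suc n)) \<le> card (codes n)"
    by simp
  obtain i j e where ij: "i < p" "j < p" "i \<noteq> j"
    and ei: "\<forall>m<p. m \<noteq> i \<longrightarrow> cross e (v m - v i) < 0"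
    and ej: "\<forall>m<p. m \<noteq> j \<longrightarrow> 0 < cross e (v m - v j)"
    using exists_extremal_vertices by blast
  obtain x where x: "regular x" and zz: "\<forall>k\<le>n. bounces i j x k"
    using exists_regular_bouncing[OF ij(1,2) ei ej] by blast
  have "\<forall>k\<le>2 * n + 1. idx ((T ^^ k) x) = alternating i j k"
    by (rule orbit_alternates_if_bounces[OF ij(1,2) zz])
  then have "\<forall>k\<le>n + 1. idx ((T ^^ k) x) = alternating i j k"
    by auto
  then have "idx ((T ^^ k) x) = alternating i j k" for k
    using alternating_forever_if_next_determined[OF code_next_determined[OF le] x] by blast
  then have "\<forall>k. bounces i j x k"
    using bounces_if_orbit_alternates[OF x, of i j] by blast
  then show False
    using not_bounces_forever[OF ij] by blast
qed

lemma card_codes_ge: "n \<le> card (codes n)"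
proof (induction n)
  case (Suc n)
  then show ?case
    using card_codes_less_Suc[of n] by simp
qed simp

section \<open>Polynomial upper bound\<close>

definition splits :: "nat \<Rightarrow> nat list \<Rightarrow> bool" where
  "splits n w \<longleftrightarrow> (\<exists>x y. regular x \<and> regular y \<and> code n x = w \<and> code n y = w
                      \<and> idx ((T ^^ n) x) \<noteq> idx ((T ^^ n) y))"

lemma card_extensions_le:
  "card {u \<in> codes (Suc n). take n u = w} \<le> (if splits n w then p else 1)"
proof -
  let ?E = "{u \<in> codes (Suc n). take n u = w}"
  have E: "\<exists>x. regular x \<and> code n x = w \<and> u = w @ [idx ((T ^^ n) x)]" if u: "u \<in> ?E" for u
  proof -
    obtain x where x: "regular x" "u = code (Suc n) x"
      using u unfolding codes_def by blast
    then have "code n x = w"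
      using u take_code[of n "Suc n" x] by simp
    with x show ?thesis
      by (intro exI[of _ x]) (simp add: code_Suc)
  qed
  have "finite ?E"
    using finite_codes by simp
  show ?thesis
  proof (cases "splits n w")
    case True
    have "?E \<subseteq> (\<lambda>a. w @ [a]) ` {..<p}"
    proof
      fix u assume "u \<in> ?E"
      then obtain x where "regular x" "u = w @ [idx ((T ^^ n) x)]"
        using E by blast
      then show "u \<in> (\<lambda>a. w @ [a]) ` {..<p}"
        using regular_orbit_in_strict_region[of x n] by auto
    qed
    then have "card ?E \<le> card ((\<lambda>a. w @ [a]) ` {..<p})"
      by (rule card_mono[rotated]) simp
    also have "\<dots> \<le> p"
      using card_image_le[of "{..<p}" "\<lambda>a. w @ [a]"] by simp
    finally show ?thesis
      using True by simp
  next
    case False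
    have "u1 = u2" if u12: "u1 \<in> ?E" "u2 \<in> ?E" for u1 u2
    proof -
      obtain x1 x2 where "regular x1" "code n x1 = w" "u1 = w @ [idx ((T ^^ n) x1)]"
        "regular x2" "code n x2 = w" "u2 = w @ [idx ((T ^^ n) x2)]"
        using E[OF u12(1)] E[OF u12(2)] by blast
      moreover have "idx ((T ^^ n) x1) = idx ((T ^^ n) x2)"
        using False calculation unfolding splits_def by blast
      ultimately show ?thesis
        by simp
    qed
    then show ?thesis
      using False card_le_Suc0_iff_eq[OF \<open>finite ?E\<close>] by auto
  qed
qed

lemma card_codes_Suc_le:
  "card (codes (Suc n)) \<le> card (codes n) + (p - 1) * card {w \<in> codes n. splits n w}"
proof -
  define E where "E w = {u \<in> codes (Suc n). take n u = w}" for w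
  have "codes (Suc n) = (\<Union>w\<in>codes n. E w)"
    using take_codes_Suc unfolding E_def by blast
  moreover have "card (\<Union>w\<in>codes n. E w) \<le> (\<Sum>w\<in>codes n. card (E w))"
    by (rule card_UN_le[OF finite_codes])
  ultimately have "card (codes (Suc n)) \<le> (\<Sum>w\<in>codes n. card (E w))"
    by argo
  also have "\<dots> \<le> (\<Sum>w\<in>codes n. 1 + (if splits n w then p - 1 else 0))"
  proof (rule sum_mono)
    fix w
    show "card (E w) \<le> 1 + (if splits n w then p - 1 else 0)"
      using card_extensions_le[of n w] three_le_p unfolding E_def by (simp split: if_splits)
  qed
  also have "\<dots> = card (codes n) + (\<Sum>w\<in>codes n. if splits n w then p - 1 else 0)"
    by (simp only: sum.distrib) simp
  also have "(\<Sum>w\<in>codes n. if splits n w then p - 1 else 0) = (\<Sum>w\<in>{w \<in> codes n. splits n w}. p - 1)"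
    by (rule sum.inter_filter[OF finite_codes, symmetric])
  finally show ?thesis
    by (simp add: mult.commute)
qed

lemma card_codes_one_le: "card (codes 1) \<le> p"
proof -
  have "codes 1 \<subseteq> (\<lambda>a. [a]) ` {..<p}"
  proof
    fix u assume "u \<in> codes 1"
    then obtain x where "regular x" "u = code 1 x"
      by (auto simp: codes_def)
    then show "u \<in> (\<lambda>a. [a]) ` {..<p}"
      using regular_orbit_in_strict_region[of x 0] by (simp add: ob_code_def)
  qed
  then have "card (codes 1) \<le> card ((\<lambda>a. [a]) ` {..<p})"
    by (rule card_mono[rotated]) simp
  also have "\<dots> \<le> p"
    using card_image_le[of "{..<p}" "\<lambda>a. [a]"] by simp
  finally show ?thesis .
qed

definition closed_region :: "nat \<Rightarrow> (real \<times> real) set" where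
  "closed_region k = {z. \<forall>m<p. 0 \<le> cross (v k - z) (v m - z)}"

lemma closed_closed_region: "closed (closed_region k)"
proof -
  have "closed_region k = (\<Inter>m\<in>{..<p}. {z. 0 \<le> cross (v k - z) (v m - z)})"
    by (auto simp: closed_region_def)
  also have "closed \<dots>"
    by (intro closed_INT ballI closed_Collect_le continuous_on_const)
      (unfold cross_def, intro continuous_intros)
  finally show ?thesis .
qed

lemma ob_region_eq: "ob_region p v k = closed_region k - polygon p v"
  by (auto simp: ob_region_def closed_region_def)

text \<open>The closed regions cover the segment; by connectedness two different ones meet on it, and
  a common point of two regions lies on a ray.\<close>

lemma segment_meets_rays:
  assumes S: "closed_segment a b \<inter> polygon p v = {}"
    and ab: "i < p" "a \<in> strict_region i" "j < p" "b \<in> strict_region j" "i \<noteq> j"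
  shows "\<exists>z\<in>closed_segment a b. z \<in> ob_rays p v"
proof -
  let ?S = "closed_segment a b" and ?B = "\<Union>k\<in>{..<p} - {i}. closed_region k"
  have "closed ?B"
    by (intro closed_UN finite_Diff finite_lessThan ballI closed_closed_region)
  have cover: "?S \<subseteq> closed_region i \<union> ?B"
  proof
    fix z assume "z \<in> ?S"
    then obtain k where "k < p" "z \<in> ob_region p v k"
      using S exists_region by blast
    then show "z \<in> closed_region i \<union> ?B"
      unfolding ob_region_eq by (cases "k = i") auto
  qed
  have "a \<in> closed_region i" "b \<in> closed_region j"
    using ab strict_region_subset_region unfolding ob_region_eq by blast+
  then have "a \<in> closed_region i \<inter> ?S" "b \<in> ?B \<inter> ?S"
    using ab by auto
  then have "closed_region i \<inter> ?B \<inter> ?S \<noteq> {}"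
    using connected_closedD[OF connected_segment _ cover closed_closed_region \<open>closed ?B\<close>] by auto
  then obtain z k where z: "z \<in> ?S" "z \<in> closed_region i" "k < p" "k \<noteq> i" "z \<in> closed_region k"
    by blast
  then have z_region: "z \<in> ob_region p v i"
    using S unfolding ob_region_eq by blast
  have "0 \<le> cross (v i - z) (v k - z)" "0 \<le> cross (v k - z) (v i - z)"
    using z ab(1) unfolding closed_region_def by auto
  then have "cross (v i - z) (v k - z) = 0"
    using cross_swap[of "v i - z" "v k - z"] by linarith
  then show ?thesis
    using region_boundary_on_rays[OF ab(1) z_region z(3,4)] z(1) by blast
qed

text \<open>The two continuations of a splitting code come from points of its cell image lying in
  different regions.\<close>

lemma splitting_cell_image_meets_ray:
  assumes "1 \<le> n" "splits n w"
  shows "\<exists>j<p. \<exists>t\<ge>0. ray_point j t \<in> cell_image w"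
proof -
  obtain x y where xy: "regular x" "regular y" "code n x = w" "code n y = w"
    and ij: "idx ((T ^^ n) x) \<noteq> idx ((T ^^ n) y)"
    using assms(2) unfolding splits_def by blast
  let ?a = "(T ^^ n) x" and ?b = "(T ^^ n) y"
  have w: "set w \<subseteq> {..<p}" "w \<noteq> []"
    using set_code_subset[OF xy(1)] xy(3) length_code[of n x] assms(1) by auto
  have "?a \<in> cell_image w" "?b \<in> cell_image w"
    using orbit_in_cell_image[OF xy(1), of n] orbit_in_cell_image[OF xy(2), of n] xy(3,4) by simp_all
  then have S: "closed_segment ?a ?b \<subseteq> cell_image w"
    by (rule closed_segment_subset[OF _ _ convex_cell_image])
  then have "closed_segment ?a ?b \<inter> polygon p v = {}"
    using cell_image_not_polygon[OF w] by blast
  then obtain z where "z \<in> closed_segment ?a ?b" "z \<in> ob_rays p v"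
    using segment_meets_rays regular_orbit_in_strict_region[OF xy(1), of n]
      regular_orbit_in_strict_region[OF xy(2), of n] ij by blast
  then show ?thesis
    using S unfolding mem_ob_rays_iff by blast
qed

definition lattice :: "int \<Rightarrow> (real \<times> real) set" where
  "lattice N = {\<Sum>q<p. of_int (\<gamma> q) *\<^sub>R v q | \<gamma>. \<forall>q. \<bar>\<gamma> q\<bar> \<le> N}"

lemma lattice_mono:
  assumes "N \<le> N'"
  shows "lattice N \<subseteq> lattice N'"
proof
  fix c assume "c \<in> lattice N"
  then obtain \<gamma> where "\<forall>q. \<bar>\<gamma> q\<bar> \<le> N" "c = (\<Sum>q<p. of_int (\<gamma> q) *\<^sub>R v q)"
    unfolding lattice_def by blast
  moreover have "\<bar>\<gamma> q\<bar> \<le> N'" for q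
    using \<open>\<forall>q. \<bar>\<gamma> q\<bar> \<le> N\<close> assms by (meson order_trans)
  ultimately show "c \<in> lattice N'"
    unfolding lattice_def by blast
qed

lemma zero_in_lattice: "0 \<in> lattice 0"
  unfolding lattice_def by (intro CollectI exI[of _ "\<lambda>_. 0"]) simp

lemma lattice_subset_image:
  "lattice N \<subseteq> (\<lambda>\<gamma>. \<Sum>q<p. of_int (\<gamma> q) *\<^sub>R v q) ` PiE {..<p} (\<lambda>_. {-N..N})"
proof
  fix c assume "c \<in> lattice N"
  then obtain \<gamma> where \<gamma>: "\<forall>q. \<bar>\<gamma> q\<bar> \<le> N" "c = (\<Sum>q<p. of_int (\<gamma> q) *\<^sub>R v q)"
    unfolding lattice_def by blast
  have "\<gamma> q \<in> {-N..N}" for q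
    using \<gamma>(1)[rule_format, of q] by (simp add: abs_le_iff)
  then have "restrict \<gamma> {..<p} \<in> PiE {..<p} (\<lambda>_. {-N..N})"
    by simp
  moreover have "c = (\<Sum>q<p. of_int (restrict \<gamma> {..<p} q) *\<^sub>R v q)"
    using \<gamma>(2) by (auto intro!: sum.cong)
  ultimately show "c \<in> (\<lambda>\<gamma>. \<Sum>q<p. of_int (\<gamma> q) *\<^sub>R v q) ` PiE {..<p} (\<lambda>_. {-N..N})"
    by blast
qed

lemma finite_lattice: "finite (lattice N)"
  by (rule finite_subset[OF lattice_subset_image], intro finite_imageI finite_PiE) auto

lemma card_lattice_le: "0 \<le> N \<Longrightarrow> card (lattice N) \<le> nat (2 * N + 1) ^ p"
proof -
  assume "0 \<le> N"
  have fin: "finite (PiE {..<p} (\<lambda>_. {-N..N}))"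
    by (intro finite_PiE) auto
  have "card (lattice N) \<le> card ((\<lambda>\<gamma>. \<Sum>q<p. of_int (\<gamma> q) *\<^sub>R v q) ` PiE {..<p} (\<lambda>_. {-N..N}))"
    by (rule card_mono[OF finite_imageI[OF fin] lattice_subset_image])
  also have "\<dots> \<le> card (PiE {..<p} (\<lambda>_. {-N..N}))"
    by (rule card_image_le[OF fin])
  also have "\<dots> = nat (2 * N + 1) ^ p"
    using \<open>0 \<le> N\<close> by (simp add: card_PiE)
  finally show ?thesis .
qed

lemma reflections_in_lattice:
  assumes "set w \<subseteq> {..<p}" "y \<in> lattice N"
  shows "reflections w y \<in> lattice (N + 2 * int (length w))"
  using assms(1)
proof (induction w rule: rev_induct)
  case Nil
  then show ?case using assms(2) by simp
next
  case (snoc a w)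
  then obtain \<gamma> where \<gamma>: "\<forall>q. \<bar>\<gamma> q\<bar> \<le> N + 2 * int (length w)"
    "reflections w y = (\<Sum>q<p. of_int (\<gamma> q) *\<^sub>R v q)"
    unfolding lattice_def by auto
  define \<gamma>' where "\<gamma>' q = (if q = a then 2 else 0) - \<gamma> q" for q
  have "\<bar>\<gamma>' q\<bar> \<le> N + 2 * int (length (w @ [a]))" for q
    using \<gamma>(1)[rule_format, of q] unfolding \<gamma>'_def by auto
  moreover have "(\<Sum>q<p. of_int (\<gamma>' q) *\<^sub>R v q)
      = (\<Sum>q<p. (if q = a then 2 *\<^sub>R v q else 0) - of_int (\<gamma> q) *\<^sub>R v q)"
    unfolding \<gamma>'_def by (rule sum.cong) (auto simp: algebra_simps)
  moreover have "\<dots> = reflections (w @ [a]) y"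
    using snoc.prems \<gamma>(2) by (simp add: sum_subtractf)
  ultimately show ?case
    unfolding lattice_def by (intro CollectI exI[of _ \<gamma>']) simp
qed

lemma reflections_reflections_affine:
  "reflections u (reflections w z) = (-1) ^ (length u + length w) *\<^sub>R z + reflections u (reflections w 0)"
proof -
  have u: "reflections u (reflections w z) = reflections u 0 + (-1) ^ length u *\<^sub>R reflections w z"
    "reflections u (reflections w 0) = reflections u 0 + (-1) ^ length u *\<^sub>R reflections w 0"
    by (rule reflections_affine)+
  have w: "reflections w z = reflections w 0 + (-1) ^ length w *\<^sub>R z"
    by (rule reflections_affine)
  show ?thesis
    by (simp only: u) (simp add: w algebra_simps power_add)
qed

lemma mem_cell_image_iff_constraints:
  "z \<in> cell_image w \<longleftrightarrow> (\<forall>k<length w.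
     (-1) ^ (k + length w) *\<^sub>R z + reflections (take k w) (reflections (rev w) 0) \<in> strict_region (w ! k))"
proof -
  have "reflections (take k w) (reflections (rev w) z)
      = (-1) ^ (k + length w) *\<^sub>R z + reflections (take k w) (reflections (rev w) 0)"
    if "k < length w" for k
    using reflections_reflections_affine[of "take k w" "rev w" z] that by simp
  then show ?thesis
    unfolding mem_cell_image_iff cell_def by auto
qed

lemma cell_image_offset_in_lattice:
  assumes "set w \<subseteq> {..<p}" "k < length w"
  shows "reflections (take k w) (reflections (rev w) 0) \<in> lattice (4 * int (length w))"
proof -
  have "set (rev w) \<subseteq> {..<p}" "set (take k w) \<subseteq> {..<p}"
    using assms(1) order_trans[OF set_take_subset assms(1)] by simp_all
  then have "reflections (take k w) (reflections (rev w) 0)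
      \<in> lattice ((0 + 2 * int (length (rev w))) + 2 * int (length (take k w)))"
    using reflections_in_lattice zero_in_lattice by metis
  moreover have "(0 + 2 * int (length (rev w))) + 2 * int (length (take k w)) \<le> 4 * int (length w)"
    using assms(2) by simp
  ultimately show ?thesis
    by (metis lattice_mono subsetD)
qed

text \<open>The parameters at which a point \<open>\<sigma> z + c\<close>, \<open>z\<close> moving along the ray at \<open>v j\<close>, crosses the
  line through \<open>v a\<close> and \<open>v m\<close>.\<close>

definition ray_roots :: "nat \<Rightarrow> nat \<Rightarrow> real set" where
  "ray_roots j n = (\<lambda>(a, m, \<sigma>, c). cross (v a - \<sigma> *\<^sub>R v j - c) (v m - v a)
                                  / (\<sigma> * cross (v j - v (Suc j mod p)) (v m - v a)))
     ` ({..<p} \<times> {..<p} \<times> {1, -1} \<times> lattice (4 * int n))"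

lemma finite_ray_roots: "finite (ray_roots j n)"
  by (simp add: ray_roots_def finite_lattice)

lemma card_ray_roots_le: "card (ray_roots j n) \<le> 2 * p ^ 2 * (8 * n + 1) ^ p"
proof -
  have "card (ray_roots j n) \<le> card ({..<p} \<times> {..<p} \<times> {1::real, -1} \<times> lattice (4 * int n))"
    unfolding ray_roots_def by (rule card_image_le) (simp add: finite_lattice)
  also have "\<dots> = p * p * 2 * card (lattice (4 * int n))"
    by (simp add: card_cartesian_product)
  also have "card (lattice (4 * int n)) \<le> (8 * n + 1) ^ p"
    using card_lattice_le[of "4 * int n"] by (simp add: nat_add_distrib nat_mult_distrib)
  finally show ?thesis
    by (simp add: power2_eq_square)
qed

definition ray_params :: "nat \<Rightarrow> nat list \<Rightarrow> real set" where
  "ray_params j w = {t. 0 \<le> t \<and> ray_point j t \<in> cell_image w}"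

lemma bdd_below_ray_params: "bdd_below (ray_params j w)"
  by (rule bdd_belowI[of _ 0]) (simp add: ray_params_def)

lemma convex_ray_params: "convex (ray_params j w)"
  unfolding convex_alt
proof (intro ballI allI impI)
  fix t1 t2 u :: real
  assume t: "t1 \<in> ray_params j w" "t2 \<in> ray_params j w" and u: "0 \<le> u \<and> u \<le> 1"
  have "ray_point j ((1 - u) *\<^sub>R t1 + u *\<^sub>R t2) = (1 - u) *\<^sub>R ray_point j t1 + u *\<^sub>R ray_point j t2"
    by (simp add: ray_point_def algebra_simps)
  then show "(1 - u) *\<^sub>R t1 + u *\<^sub>R t2 \<in> ray_params j w"
    using t u convexD_alt[OF convex_cell_image] by (simp add: ray_params_def)
qed

lemma ray_params_open:
  assumes "t \<in> ray_params j w"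
  obtains \<epsilon> where "0 < \<epsilon>" "\<And>t'. 0 \<le> t' \<Longrightarrow> \<bar>t' - t\<bar> < \<epsilon> \<Longrightarrow> t' \<in> ray_params j w"
proof -
  have "open (ray_point j -` cell_image w)"
    unfolding ray_point_def by (intro continuous_open_vimage open_cell_image continuous_intros)
  moreover have "t \<in> ray_point j -` cell_image w"
    using assms by (simp add: ray_params_def)
  ultimately obtain \<epsilon> where \<epsilon>: "0 < \<epsilon>" "ball t \<epsilon> \<subseteq> ray_point j -` cell_image w"
    by (meson openE)
  show ?thesis
  proof (rule that[OF \<epsilon>(1)])
    fix t' :: real assume "0 \<le> t'" "\<bar>t' - t\<bar> < \<epsilon>"
    then have "0 \<le> t'" "t' \<in> ball t \<epsilon>"
      by (simp_all add: dist_real_def abs_minus_commute)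
    then show "t' \<in> ray_params j w"
      using \<epsilon>(2) by (auto simp: ray_params_def)
  qed
qed

lemma ray_params_no_max: "\<forall>t\<in>ray_params j w. \<exists>t'\<in>ray_params j w. t < t'"
proof
  fix t assume t: "t \<in> ray_params j w"
  obtain \<epsilon> where "0 < \<epsilon>" "\<And>t'. 0 \<le> t' \<Longrightarrow> \<bar>t' - t\<bar> < \<epsilon> \<Longrightarrow> t' \<in> ray_params j w"
    using ray_params_open[OF t] by blast
  moreover have "0 \<le> t"
    using t by (simp add: ray_params_def)
  ultimately show "\<exists>t'\<in>ray_params j w. t < t'"
    by (intro bexI[of _ "t + \<epsilon> / 2"]) auto
qed

lemma Inf_ray_params_eq_0:
  assumes "Inf (ray_params j w) \<in> ray_params j w"
  shows "Inf (ray_params j w) = 0"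
proof (rule ccontr)
  let ?I = "ray_params j w" and ?s = "Inf (ray_params j w)"
  assume "?s \<noteq> 0"
  moreover have "0 \<le> ?s"
    using assms by (simp add: ray_params_def)
  moreover obtain \<epsilon> where "0 < \<epsilon>" "\<And>t'. 0 \<le> t' \<Longrightarrow> \<bar>t' - ?s\<bar> < \<epsilon> \<Longrightarrow> t' \<in> ?I"
    using ray_params_open[OF assms] by blast
  moreover define t where "t = ?s - min \<epsilon> ?s / 2"
  ultimately have "t \<in> ?I" "t < ?s"
    by (auto simp: t_def min_def)
  then show False
    using cInf_lower[OF _ bdd_below_ray_params, of t j w] by simp
qed

text \<open>If the left end point of \<open>ray_params j w\<close> is not attained, one of the finitely many
  affine constraints cutting out the cell image is an equality there.\<close>

lemma Inf_ray_params_in_ray_roots: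
  assumes w: "w \<in> codes n" and ne: "ray_params j w \<noteq> {}"
    and not_attained: "Inf (ray_params j w) \<notin> ray_params j w"
  shows "Inf (ray_params j w) \<in> ray_roots j n"
proof -
  let ?I = "ray_params j w" and ?s = "Inf (ray_params j w)"
  have wp: "set w \<subseteq> {..<p}" "length w = n"
    using w codes_subset by auto
  have "0 \<le> ?s"
    using ne by (intro cInf_greatest) (auto simp: ray_params_def)
  then obtain k where k: "k < length w" and
    out: "\<not> (-1) ^ (k + length w) *\<^sub>R ray_point j ?s + reflections (take k w) (reflections (rev w) 0)
            \<in> strict_region (w ! k)"
    using not_attained unfolding ray_params_def mem_cell_image_iff_constraints by auto
  define \<sigma> :: real where "\<sigma> = (-1) ^ (k + length w)"
  define c where "c = reflections (take k w) (reflections (rev w) 0)"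
  define a where "a = w ! k"
  have a: "a < p"
    using wp k nth_mem unfolding a_def by blast
  obtain m where m: "m < p" "m \<noteq> a" and
    not_pos: "\<not> 0 < cross (v a - (\<sigma> *\<^sub>R ray_point j ?s + c)) (v m - (\<sigma> *\<^sub>R ray_point j ?s + c))"
    using out unfolding strict_region_def \<sigma>_def c_def a_def by blast
  define \<alpha> where "\<alpha> = cross (v a - \<sigma> *\<^sub>R v j - c) (v m - v a)"
  define \<beta> where "\<beta> = \<sigma> * cross (v j - v (Suc j mod p)) (v m - v a)"
  have affine: "cross (v a - (\<sigma> *\<^sub>R ray_point j t + c)) (v m - (\<sigma> *\<^sub>R ray_point j t + c)) = \<alpha> - t * \<beta>"
    for t
    by (simp add: \<alpha>_def \<beta>_def ray_point_def cross_def algebra_simps)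
  have "\<forall>t\<in>?I. 0 < \<alpha> - t * \<beta>"
  proof
    fix t assume "t \<in> ?I"
    then have "\<sigma> *\<^sub>R ray_point j t + c \<in> strict_region a"
      using k unfolding ray_params_def mem_cell_image_iff_constraints \<sigma>_def c_def a_def by blast
    then show "0 < \<alpha> - t * \<beta>"
      using m affine[of t] unfolding strict_region_def by auto
  qed
  then have "\<beta> \<noteq> 0 \<and> ?s = \<alpha> / \<beta>"
    using Inf_eq_root_if_affine_pos[OF ne bdd_below_ray_params] not_pos affine by simp
  moreover have "\<sigma> \<in> {1, -1}"
    unfolding \<sigma>_def by (cases "even (k + length w)") auto
  moreover have "c \<in> lattice (4 * int n)"
    unfolding c_def using cell_image_offset_in_lattice[OF wp(1) k] wp(2) by simp
  ultimately show ?thesis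
    unfolding ray_roots_def using a m(1)
    by (intro rev_image_eqI[of "(a, m, \<sigma>, c)"]) (auto simp: \<alpha>_def \<beta>_def)
qed

lemma card_codes_meeting_ray_le:
  "card {w \<in> codes n. ray_params j w \<noteq> {}} \<le> card (ray_roots j n) + 1"
proof -
  let ?W = "{w \<in> codes n. ray_params j w \<noteq> {}}"
  have "inj_on (\<lambda>w. Inf (ray_params j w)) ?W"
  proof (rule inj_onI)
    fix w w' assume w: "w \<in> ?W" and w': "w' \<in> ?W"
      and "Inf (ray_params j w) = Inf (ray_params j w')"
    then obtain t where "t \<in> ray_params j w" "t \<in> ray_params j w'"
      using Inf_eq_imp_intervals_meet[OF convex_ray_params convex_ray_params bdd_below_ray_params
          bdd_below_ray_params ray_params_no_max ray_params_no_max] by blast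
    then have "ray_point j t \<in> cell_image w" "ray_point j t \<in> cell_image w'"
      by (simp_all add: ray_params_def)
    moreover have "set w \<subseteq> {..<p}" "length w = n" "set w' \<subseteq> {..<p}" "length w' = n"
      using w w' codes_subset by auto
    ultimately show "w = w'"
      using cell_image_disjoint[of w w' "ray_point j t"] by simp
  qed
  then have "card ?W = card ((\<lambda>w. Inf (ray_params j w)) ` ?W)"
    by (simp add: card_image)
  also have "\<dots> \<le> card (insert 0 (ray_roots j n))"
  proof (rule card_mono)
    show "(\<lambda>w. Inf (ray_params j w)) ` ?W \<subseteq> insert 0 (ray_roots j n)"
      using Inf_ray_params_eq_0 Inf_ray_params_in_ray_roots by blast
  qed (simp add: finite_ray_roots)
  also have "\<dots> \<le> card (ray_roots j n) + 1"
    by (simp add: card_insert_if finite_ray_roots)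
  finally show ?thesis .
qed

lemma card_splitting_codes_le:
  assumes "1 \<le> n"
  shows "card {w \<in> codes n. splits n w} \<le> p * (2 * p ^ 2 * (8 * n + 1) ^ p + 1)"
proof -
  have "{w \<in> codes n. splits n w} \<subseteq> (\<Union>j<p. {w \<in> codes n. ray_params j w \<noteq> {}})"
    using splitting_cell_image_meets_ray[OF assms] by (fastforce simp: ray_params_def)
  then have "card {w \<in> codes n. splits n w} \<le> card (\<Union>j<p. {w \<in> codes n. ray_params j w \<noteq> {}})"
    by (intro card_mono) (auto intro: finite_subset[OF _ finite_codes])
  also have "\<dots> \<le> (\<Sum>j<p. card {w \<in> codes n. ray_params j w \<noteq> {}})"
    by (rule card_UN_le) simp
  also have "\<dots> \<le> (\<Sum>j<p. 2 * p ^ 2 * (8 * n + 1) ^ p + 1)"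
  proof (rule sum_mono)
    fix j assume "j \<in> {..<p}"
    then show "card {w \<in> codes n. ray_params j w \<noteq> {}} \<le> 2 * p ^ 2 * (8 * n + 1) ^ p + 1"
      using card_codes_meeting_ray_le[where j = j and n = n] card_ray_roots_le[of j n] by simp
  qed
  finally show ?thesis
    by simp
qed

lemma card_codes_Suc_le_power:
  assumes "1 \<le> n"
  shows "card (codes (Suc n)) \<le> card (codes n) + 3 * p ^ 4 * 9 ^ p * n ^ p"
proof -
  have "(p - 1) * card {w \<in> codes n. splits n w} \<le> p * (p * (2 * p ^ 2 * (8 * n + 1) ^ p + 1))"
    using card_splitting_codes_le[OF assms] by (intro mult_le_mono) auto
  also have "\<dots> \<le> p * (p * (2 * p ^ 2 * (9 * n) ^ p + p ^ 2 * (9 * n) ^ p))"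
  proof -
    have "(8 * n + 1) ^ p \<le> (9 * n) ^ p"
      using assms by (intro power_mono) auto
    moreover have "1 \<le> p ^ 2 * (9 * n) ^ p"
      using assms three_le_p by (simp add: Suc_le_eq)
    ultimately show ?thesis
      by (intro mult_le_mono2 add_mono) (auto intro: mult_le_mono2)
  qed
  also have "\<dots> = 3 * p ^ 4 * 9 ^ p * n ^ p"
    by (simp add: algebra_simps power2_eq_square power4_eq_xxxx)
  finally show ?thesis
    using card_codes_Suc_le[of n] by linarith
qed

lemma card_codes_le:
  assumes "1 \<le> n"
  shows "card (codes n) \<le> (p + 3 * p ^ 4 * 9 ^ p) * n ^ (p + 1)"
proof -
  let ?K = "3 * p ^ 4 * 9 ^ p"
  have "card (codes n) \<le> p + ?K * n ^ (p + 1)"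
    using assms
  proof (induction n rule: dec_induct)
    case base
    then show ?case using card_codes_one_le by simp
  next
    case (step n)
    have "n ^ (p + 1) + n ^ p = n ^ p * Suc n"
      by (simp add: algebra_simps)
    also have "\<dots> \<le> Suc n ^ p * Suc n"
      by (intro mult_le_mono1 power_mono) auto
    finally have "n ^ (p + 1) + n ^ p \<le> Suc n ^ (p + 1)"
      by (simp add: mult.commute)
    then have "?K * n ^ (p + 1) + ?K * n ^ p \<le> ?K * Suc n ^ (p + 1)"
      by (metis add_mult_distrib2 mult_le_mono2)
    then show ?case
      using step card_codes_Suc_le_power[OF step(1)] by linarith
  qed
  also have "\<dots> \<le> (p + ?K) * n ^ (p + 1)"
    using assms by (simp add: algebra_simps)
  finally show ?thesis .
qed

end

theorem mainTheorem4:
  fixes p :: nat and v :: "nat \<Rightarrow> real \<times> real"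
  assumes "convex_polygon p v"
  shows "(\<exists>C. \<forall>\<^sub>F n in sequentially. real n \<le> C * real (ob_complexity p v n))
       \<and> (\<exists>C. \<forall>\<^sub>F n in sequentially. real (ob_complexity p v n) \<le> C * real n ^ (p + 1))"
proof -
  interpret convex_billiard p v
    using assms by (rule convex_billiard.intro)
  have "real n \<le> 1 * real (ob_complexity p v n)" for n
    using card_codes_ge by (simp add: ob_complexity_eq_card_codes)
  moreover have "real (ob_complexity p v n) \<le> real (p + 3 * p ^ 4 * 9 ^ p) * real n ^ (p + 1)"
    if "1 \<le> n" for n
    using card_codes_le[OF that] unfolding ob_complexity_eq_card_codes of_nat_power[symmetric]
      of_nat_mult[symmetric] by (rule of_nat_mono)
  ultimately show ?thesis
    unfolding eventually_sequentially by (intro conjI exI) blast+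
qed

end
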